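(* Let $N=2$, $J=1$, $h_0=[0,1]^{\sf T}$, $h_1=[\cos\tau,\sin\tau]^{\sf T}$ with $\tau\in(-\pi/2,\pi/2)$, $\sigma_0^2,\sigma_1^2,\sigma_n^2>0$, and $c_1\in[-\sigma_0\sigma_1,\sigma_0\sigma_1]$. Then for every $\lambda\ge0$, \[ w_{\rm RZF}(\lambda)=\begin{bmatrix}-\dfrac{\cos\tau\,[(\sigma_1^2+\lambda)\sin\tau+c_1]}{(\sigma_1^2+\lambda)\cos^2\tau+\sigma_n^2}\\[2mm] 1\end{bmatrix}, \] and \[ \mathrm{MSE}(\lambda)=\frac{\delta^2(\sigma_1^2\cos^2\tau+\sigma_n^2)}{g(\lambda)^2}-\frac{2\sigma_n^2\delta\tan\tau}{g(\lambda)}+\sigma_n^2(\tan^2\tau+1), \] where $\delta:=\sigma_n^2\tan\tau-c_1\cos\tau$ and $g(\lambda):=\lambda\cos^2\tau+\sigma_1^2\cos^2\tau+\sigma_n^2>0$. Furthermore: (i) if $\delta=0$, then $\mathrm{MSE}(\lambda)=\sigma_n^2(\tan^2\tau+1)$ for all $\lambda\ge0$; (ii) if $\delta\neq0$ and $\gamma:=\sigma_n^2\tan\tau/\delta\le0$, then $\mathrm{MSE}(\lambda)$ is decreasing on $[0,\infty)$ and $\inf_{\lambda\ge0}\mathrm{MSE}(\lambda)=\lim_{\lambda\to\infty}\mathrm{MSE}(\lambda)$ (the zero-forcing limit); (iii) if $\delta\ne0$ and $\gamma>0$, then $\mathrm{MSE}$ is minimized over $[0,\infty)$ by $\lambda=-\dfrac{c_1(\sigma_1^2\cos^2\tau+\sigma_n^2)}{\sigma_n^2\sin\tau}>0$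 when $\gamma\in(0,1)$, and by $\lambda=0$ when $\gamma\ge1$.
   Context: Real-valued single-interference model: $y(k)=s_0(k)h_0+s_1(k)h_1+n(k)\in\mathbb{R}^N$, with real zero-mean jointly weakly stationary signals $s_0,s_1$, $\sigma_j^2:=E[s_j(k)^2]$, $c_1:=E[s_0(k)s_1(k)]$, and real zero-mean noise $n(k)\sim\mathcal{N}(0,\sigma_n^2I)$ uncorrelated with the signals. $R:=E[y(k)y(k)^{\sf T}]$. For $\lambda\ge0$, $R_\lambda:=R+\lambda h_1h_1^{\sf T}$ and the RZF beamformer is $w_{\rm RZF}(\lambda):=R_\lambda^{-1}h_0/(h_0^{\sf T}R_\lambda^{-1}h_0)$. The MSE of a beamformer $w$ is $J_{\rm MSE}(w):=E[(w^{\sf T}y(k)-s_0(k))^2]$, and $\mathrm{MSE}(\lambda):=J_{\rm MSE}(w_{\rm RZF}(\lambda))$. *)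

theory Defs
  imports "HOL-Analysis.Analysis"
begin

definition outer :: "real^'n \<Rightarrow> real^'n \<Rightarrow> real^'n^'n" where
  "outer a b = (\<chi> i j. a$i * b$j)"

text \<open>Covariance R = E[y y^T] of y = s0 h0 + s1 h1 + n, expressed through the
  second moments: E[s0^2] = sigma0^2, E[s1^2] = sigma1^2, E[s0 s1] = c1,
  E[n n^T] = sigman^2 I, noise uncorrelated with signals.\<close>
definition cov_R :: "real \<Rightarrow> real \<Rightarrow> real \<Rightarrow> real \<Rightarrow> real^'n \<Rightarrow> real^'n \<Rightarrow> real^'n^'n" where
  "cov_R \<sigma>0 \<sigma>1 \<sigma>n c1 h0 h1 =
     \<sigma>0\<^sup>2 *\<^sub>R outer h0 h0 + \<sigma>1\<^sup>2 *\<^sub>R outer h1 h1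
     + c1 *\<^sub>R (outer h0 h1 + outer h1 h0) + \<sigma>n\<^sup>2 *\<^sub>R mat 1"

definition w_RZF :: "real^'n^'n \<Rightarrow> real^'n \<Rightarrow> real^'n \<Rightarrow> real \<Rightarrow> real^'n" where
  "w_RZF R h0 h1 l =
     (let Rl = R + l *\<^sub>R outer h1 h1
      in (1 / (h0 \<bullet> (matrix_inv Rl *v h0))) *\<^sub>R (matrix_inv Rl *v h0))"

text \<open>J_MSE(w) = E[(w^T y - s0)^2] = w^T R w - 2 w^T E[y s0] + E[s0^2],
  with E[y s0] = sigma0^2 h0 + c1 h1.\<close>
definition J_MSE :: "real \<Rightarrow> real \<Rightarrow> real \<Rightarrow> real \<Rightarrow> real^'n \<Rightarrow> real^'n \<Rightarrow> real^'n \<Rightarrow> real" where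
  "J_MSE \<sigma>0 \<sigma>1 \<sigma>n c1 h0 h1 w =
     w \<bullet> (cov_R \<sigma>0 \<sigma>1 \<sigma>n c1 h0 h1 *v w) - 2 * (w \<bullet> (\<sigma>0\<^sup>2 *\<^sub>R h0 + c1 *\<^sub>R h1)) + \<sigma>0\<^sup>2"

definition MSE_RZF :: "real \<Rightarrow> real \<Rightarrow> real \<Rightarrow> real \<Rightarrow> real^'n \<Rightarrow> real^'n \<Rightarrow> real \<Rightarrow> real" where
  "MSE_RZF \<sigma>0 \<sigma>1 \<sigma>n c1 h0 h1 l =
     J_MSE \<sigma>0 \<sigma>1 \<sigma>n c1 h0 h1 (w_RZF (cov_R \<sigma>0 \<sigma>1 \<sigma>n c1 h0 h1) h0 h1 l)"

end

theory Submission
  imports Defs "HOL-Real_Asymp.Real_Asymp"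
begin

(* R_lambda is sigma_n^2 I plus a positive semidefinite matrix (because |c1| <= sigma0 sigma1),
   so it is invertible, and in dimension two the normalised solution of R_lambda u = h0 is read off
   from the first row of R_lambda. Substituting it into J_MSE and writing t = 1 / g(lambda) gives
   MSE = delta^2 (G t^2 - 2 gamma t) + sigma_n^2 (tan^2 tau + 1) with G = sigma1^2 cos^2 tau + sigma_n^2:
   a convex parabola in t with vertex gamma / G, while t decreases from 1 / G to 0 as lambda runs
   over [0, oo). The three cases are the three positions of the vertex relative to (0, 1 / G]. *)

lemma matrix_inv_right:
  "invertible A \<Longrightarrow> A ** matrix_inv A = mat 1"
  unfolding invertible_def matrix_inv_def by (rule someI_ex[THEN conjunct1])

lemma outer_mult_vector: "outer a b *v x = (b \<bullet> x) *\<^sub>R a"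
  by (simp add: vec_eq_iff outer_def matrix_vector_mult_def inner_vec_def sum_distrib_left mult_ac)

lemma inner_outer_mult: "x \<bullet> (outer a b *v x) = (a \<bullet> x) * (b \<bullet> x)"
  by (simp add: outer_mult_vector inner_commute)

lemma regularized_cov_quadratic_form:
  "x \<bullet> ((cov_R \<sigma>0 \<sigma>1 \<sigma>n c1 h0 h1 + l *\<^sub>R outer h1 h1) *v x) =
     \<sigma>0\<^sup>2 * (h0 \<bullet> x)\<^sup>2 + (\<sigma>1\<^sup>2 + l) * (h1 \<bullet> x)\<^sup>2 + 2 * c1 * (h0 \<bullet> x) * (h1 \<bullet> x)
     + \<sigma>n\<^sup>2 * (x \<bullet> x)"
  by (simp add: cov_R_def scaleR_matrix_vector_assoc[symmetric]
      inner_add_right inner_outer_mult inner_commute power2_eq_square algebra_simps)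

lemma correlated_quadratic_nonneg:
  fixes a b c s t :: real
  assumes "c\<^sup>2 \<le> s\<^sup>2 * t\<^sup>2"
  shows "0 \<le> s\<^sup>2 * a\<^sup>2 + t\<^sup>2 * b\<^sup>2 + 2 * c * a * b"
proof -
  have "\<bar>c\<bar> \<le> \<bar>s * t\<bar>"
    using assms by (simp add: abs_le_square_iff power_mult_distrib)
  then have "\<bar>c\<bar> * \<bar>a * b\<bar> \<le> \<bar>s * t\<bar> * \<bar>a * b\<bar>"
    by (rule mult_right_mono) simp
  then have "\<bar>c * a * b\<bar> \<le> \<bar>s * a\<bar> * \<bar>t * b\<bar>"
    by (simp add: abs_mult mult_ac)
  moreover have "2 * (\<bar>s * a\<bar> * \<bar>t * b\<bar>) \<le> (s * a)\<^sup>2 + (t * b)\<^sup>2"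
    using sum_squares_bound[of "\<bar>s * a\<bar>" "\<bar>t * b\<bar>"] by simp
  ultimately show ?thesis
    by (simp add: power_mult_distrib abs_le_iff)
qed

lemma regularized_cov_pos_def:
  fixes h0 h1 x :: "real^'n"
  assumes "c1\<^sup>2 \<le> \<sigma>0\<^sup>2 * \<sigma>1\<^sup>2" "\<sigma>n \<noteq> 0" "l \<ge> 0" "x \<noteq> 0"
  shows "0 < x \<bullet> ((cov_R \<sigma>0 \<sigma>1 \<sigma>n c1 h0 h1 + l *\<^sub>R outer h1 h1) *v x)"
proof -
  have "0 \<le> \<sigma>0\<^sup>2 * (h0 \<bullet> x)\<^sup>2 + \<sigma>1\<^sup>2 * (h1 \<bullet> x)\<^sup>2 + 2 * c1 * (h0 \<bullet> x) * (h1 \<bullet> x)"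
    using assms(1) by (rule correlated_quadratic_nonneg)
  moreover have "0 \<le> l * (h1 \<bullet> x)\<^sup>2" "0 < \<sigma>n\<^sup>2 * (x \<bullet> x)"
    using assms(2-4) by simp_all
  ultimately show ?thesis
    unfolding regularized_cov_quadratic_form by (simp add: algebra_simps)
qed

lemma pos_def_invertible:
  fixes A :: "real^'n^'n"
  assumes "\<And>x. x \<noteq> 0 \<Longrightarrow> 0 < x \<bullet> (A *v x)"
  shows "invertible A"
  unfolding invertible_left_inverse matrix_left_invertible_ker
  using assms by fastforce

lemma normalized_inverse_column_2:
  fixes A :: "real^2^2"
  assumes "invertible A" "A$1$1 \<noteq> 0"
  defines "e \<equiv> vector [0, 1] :: real^2"
  shows "(1 / (e \<bullet> (matrix_inv A *v e))) *\<^sub>R (matrix_inv A *v e) = vector [- A$1$2 / A$1$1, 1]"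
proof -
  define u where "u = matrix_inv A *v e"
  have "A *v u = e"
    unfolding u_def matrix_vector_mul_assoc matrix_inv_right[OF assms(1)] by simp
  then have eq1: "A$1$1 * u$1 + A$1$2 * u$2 = 0" and eq2: "A$2$1 * u$1 + A$2$2 * u$2 = 1"
    by (auto simp: vec_eq_iff forall_2 matrix_vector_mult_def sum_2 e_def)
  have u2: "u$2 \<noteq> 0"
    using eq1 eq2 assms(2) by auto
  have "u$1 = - A$1$2 * u$2 / A$1$1"
    using eq1 assms(2) by (simp add: field_simps)
  moreover have "e \<bullet> u = u$2"
    by (simp add: inner_vec_def sum_2 e_def)
  ultimately show ?thesis
    unfolding u_def[symmetric] using u2 by (simp add: vec_eq_iff forall_2)
qed

lemma w_RZF_2d:
  fixes C S :: real
  assumes "c1\<^sup>2 \<le> \<sigma>0\<^sup>2 * \<sigma>1\<^sup>2" "\<sigma>n \<noteq> 0" "l \<ge> 0"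
  defines "h0 \<equiv> vector [0, 1] :: real^2" and "h1 \<equiv> vector [C, S] :: real^2"
  shows "w_RZF (cov_R \<sigma>0 \<sigma>1 \<sigma>n c1 h0 h1) h0 h1 l =
    vector [- (C * ((\<sigma>1\<^sup>2 + l) * S + c1)) / ((\<sigma>1\<^sup>2 + l) * C\<^sup>2 + \<sigma>n\<^sup>2), 1]"
proof -
  define A where "A = cov_R \<sigma>0 \<sigma>1 \<sigma>n c1 h0 h1 + l *\<^sub>R outer h1 h1"
  have A11: "A$1$1 = (\<sigma>1\<^sup>2 + l) * C\<^sup>2 + \<sigma>n\<^sup>2"
    and A12: "A$1$2 = C * ((\<sigma>1\<^sup>2 + l) * S + c1)"
    by (simp_all add: A_def cov_R_def outer_def h0_def h1_def mat_def power2_eq_square algebra_simps)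
  have "invertible A"
    unfolding A_def by (rule pos_def_invertible, rule regularized_cov_pos_def) (use assms in auto)
  moreover have "A$1$1 > 0"
    unfolding A11 using assms(2,3) by (intro add_nonneg_pos mult_nonneg_nonneg) auto
  ultimately show ?thesis
    using normalized_inverse_column_2[of A]
    unfolding w_RZF_def Let_def A_def[symmetric] A11 A12 by (simp add: h0_def)
qed

lemma J_MSE_2d:
  "J_MSE \<sigma>0 \<sigma>1 \<sigma>n c1 (vector [0, 1]) (vector [C, S]) (vector [x, 1] :: real^2)
     = \<sigma>1\<^sup>2 * (x * C + S)\<^sup>2 + \<sigma>n\<^sup>2 * (x\<^sup>2 + 1)"
  by (simp add: J_MSE_def cov_R_def outer_def mat_def inner_vec_def sum_2 matrix_vector_mult_def
      power2_eq_square algebra_simps)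

lemma MSE_RZF_2d:
  fixes C S :: real
  assumes "c1\<^sup>2 \<le> \<sigma>0\<^sup>2 * \<sigma>1\<^sup>2" "\<sigma>n \<noteq> 0" "l \<ge> 0" "C \<noteq> 0"
  defines "h0 \<equiv> vector [0, 1] :: real^2" and "h1 \<equiv> vector [C, S] :: real^2"
    and "T \<equiv> S / C" and "\<delta> \<equiv> \<sigma>n\<^sup>2 * (S / C) - c1 * C"
    and "g \<equiv> l * C\<^sup>2 + \<sigma>1\<^sup>2 * C\<^sup>2 + \<sigma>n\<^sup>2"
  shows "MSE_RZF \<sigma>0 \<sigma>1 \<sigma>n c1 h0 h1 l =
    \<delta>\<^sup>2 * (\<sigma>1\<^sup>2 * C\<^sup>2 + \<sigma>n\<^sup>2) / g\<^sup>2 - 2 * \<sigma>n\<^sup>2 * \<delta> * T / g + \<sigma>n\<^sup>2 * (T\<^sup>2 + 1)"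
proof -
  define y where "y = \<delta> / g"
  have "g > 0"
    unfolding g_def using assms(2,3) by (intro add_nonneg_pos add_nonneg_nonneg) auto
  have "- (C * ((\<sigma>1\<^sup>2 + l) * S + c1)) = \<delta> - T * g"
    unfolding \<delta>_def T_def g_def using assms(4) by (simp add: field_simps power2_eq_square)
  moreover have "(\<sigma>1\<^sup>2 + l) * C\<^sup>2 + \<sigma>n\<^sup>2 = g"
    unfolding g_def by (simp add: algebra_simps)
  ultimately have w: "- (C * ((\<sigma>1\<^sup>2 + l) * S + c1)) / ((\<sigma>1\<^sup>2 + l) * C\<^sup>2 + \<sigma>n\<^sup>2) = y - T"
    unfolding y_def using \<open>g > 0\<close> by (simp add: diff_divide_distrib)
  have "MSE_RZF \<sigma>0 \<sigma>1 \<sigma>n c1 h0 h1 l = \<sigma>1\<^sup>2 * ((y - T) * C + S)\<^sup>2 + \<sigma>n\<^sup>2 * ((y - T)\<^sup>2 + 1)"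
    unfolding MSE_RZF_def w_RZF_2d[OF assms(1-3)] h0_def h1_def w J_MSE_2d ..
  also have "\<dots> = y\<^sup>2 * (\<sigma>1\<^sup>2 * C\<^sup>2 + \<sigma>n\<^sup>2) - 2 * \<sigma>n\<^sup>2 * T * y + \<sigma>n\<^sup>2 * (T\<^sup>2 + 1)"
    unfolding T_def using assms(4) by (simp add: field_simps power2_eq_square)
  finally show ?thesis
    unfolding y_def by (simp add: power_divide)
qed

lemma quadratic_compare_dist_vertex:
  fixes G \<gamma> s t :: real
  assumes "G > 0"
  shows "G * s\<^sup>2 - 2 * \<gamma> * s \<le> G * t\<^sup>2 - 2 * \<gamma> * t \<longleftrightarrow> \<bar>s - \<gamma> / G\<bar> \<le> \<bar>t - \<gamma> / G\<bar>"
    and "G * s\<^sup>2 - 2 * \<gamma> * s < G * t\<^sup>2 - 2 * \<gamma> * t \<longleftrightarrow> \<bar>s - \<gamma> / G\<bar> < \<bar>t - \<gamma> / G\<bar>"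
proof -
  have vertex: "G * x\<^sup>2 - 2 * \<gamma> * x = G * (x - \<gamma> / G)\<^sup>2 - \<gamma>\<^sup>2 / G" for x
    using assms by (simp add: field_simps power2_eq_square)
  show le: "G * s\<^sup>2 - 2 * \<gamma> * s \<le> G * t\<^sup>2 - 2 * \<gamma> * t \<longleftrightarrow> \<bar>s - \<gamma> / G\<bar> \<le> \<bar>t - \<gamma> / G\<bar>"
    for s t unfolding vertex using assms by (simp add: abs_le_square_iff)
  show "G * s\<^sup>2 - 2 * \<gamma> * s < G * t\<^sup>2 - 2 * \<gamma> * t \<longleftrightarrow> \<bar>s - \<gamma> / G\<bar> < \<bar>t - \<gamma> / G\<bar>"
    using le[of t s] by linarith
qed

locale inverse_quadratic_profile =
  fixes f :: "real \<Rightarrow> real" and d a G \<gamma> K :: real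
  assumes d_pos: "d > 0" and a_pos: "a > 0" and G_pos: "G > 0"
    and f_eq: "\<And>l. l \<ge> 0 \<Longrightarrow> f l = d * (G * (1 / (a * l + G))\<^sup>2 - 2 * \<gamma> * (1 / (a * l + G))) + K"
begin

abbreviation t :: "real \<Rightarrow> real" where
  "t l \<equiv> 1 / (a * l + G)"

lemma t_pos: "l \<ge> 0 \<Longrightarrow> 0 < t l"
  using a_pos G_pos by (simp add: add_nonneg_pos)

lemma t_strict_antimono: "0 \<le> l \<Longrightarrow> l < l' \<Longrightarrow> t l' < t l"
  using a_pos G_pos by (intro divide_strict_left_mono) (simp_all add: add_nonneg_pos)

lemma f_le_iff:
  assumes "0 \<le> l" "0 \<le> l'"
  shows "f l \<le> f l' \<longleftrightarrow> \<bar>t l - \<gamma> / G\<bar> \<le> \<bar>t l' - \<gamma> / G\<bar>"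
  unfolding f_eq[OF assms(1)] f_eq[OF assms(2)]
  by (simp only: add_le_cancel_right mult_le_cancel_left_pos[OF d_pos]
      quadratic_compare_dist_vertex(1)[OF G_pos])

lemma f_less_iff:
  assumes "0 \<le> l" "0 \<le> l'"
  shows "f l < f l' \<longleftrightarrow> \<bar>t l - \<gamma> / G\<bar> < \<bar>t l' - \<gamma> / G\<bar>"
  unfolding f_eq[OF assms(1)] f_eq[OF assms(2)]
  by (simp only: add_less_cancel_right mult_less_cancel_left_pos[OF d_pos]
      quadratic_compare_dist_vertex(2)[OF G_pos])

lemma strict_antimono:
  assumes "\<gamma> \<le> 0" "0 \<le> l" "l < l'"
  shows "f l' < f l"
proof -
  have "\<gamma> / G \<le> 0"
    using assms(1) G_pos by (simp add: divide_nonpos_pos)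
  moreover have "0 < t l'" "t l' < t l"
    using t_pos t_strict_antimono assms(2,3) by auto
  ultimately have "\<bar>t l' - \<gamma> / G\<bar> < \<bar>t l - \<gamma> / G\<bar>"
    by arith
  then show ?thesis
    using assms(2,3) by (simp add: f_less_iff)
qed

lemma lower_bound:
  assumes "\<gamma> \<le> 0" "l \<ge> 0"
  shows "K \<le> f l"
proof -
  have "\<gamma> / G \<le> 0"
    using assms(1) G_pos by (simp add: divide_nonpos_pos)
  then have "G * 0\<^sup>2 - 2 * \<gamma> * 0 \<le> G * (t l)\<^sup>2 - 2 * \<gamma> * t l"
    using t_pos[OF assms(2)] by (subst quadratic_compare_dist_vertex(1)[OF G_pos]) arith
  then show ?thesis
    using d_pos by (simp add: f_eq[OF assms(2)])
qed

lemma tendsto_at_top: "(f \<longlongrightarrow> K) at_top"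
proof -
  have "((\<lambda>l. d * (G * (t l)\<^sup>2 - 2 * \<gamma> * t l) + K) \<longlongrightarrow> K) at_top"
    using a_pos by real_asymp
  moreover have "\<forall>\<^sub>F l in at_top. d * (G * (t l)\<^sup>2 - 2 * \<gamma> * t l) + K = f l"
    using eventually_ge_at_top[of "0::real"] by eventually_elim (simp add: f_eq)
  ultimately show ?thesis
    by (rule Lim_transform_eventually)
qed

lemma INF_eq_limit:
  assumes "\<gamma> \<le> 0"
  shows "(INF l\<in>{0..}. f l) = K"
proof (rule antisym)
  have bdd: "bdd_below (f ` {0..})"
    by (rule bdd_belowI2[of _ K]) (auto intro: lower_bound[OF assms])
  have "\<forall>\<^sub>F l in at_top. (INF l\<in>{0..}. f l) \<le> f l"
    using eventually_ge_at_top[of "0::real"] by eventually_elim (auto intro: cINF_lower[OF bdd])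
  then show "(INF l\<in>{0..}. f l) \<le> K"
    by (rule tendsto_lowerbound[OF tendsto_at_top]) simp
  show "K \<le> (INF l\<in>{0..}. f l)"
    by (rule cINF_greatest) (auto intro: lower_bound[OF assms])
qed

lemma vertex_min:
  assumes "0 < \<gamma>" "\<gamma> < 1"
  defines "l\<^sub>v \<equiv> G * (1 - \<gamma>) / (a * \<gamma>)"
  shows "0 < l\<^sub>v" and "\<And>l. l \<ge> 0 \<Longrightarrow> f l\<^sub>v \<le> f l"
proof -
  show pos: "0 < l\<^sub>v"
    unfolding l\<^sub>v_def using assms(1,2) a_pos G_pos by simp
  have "t l\<^sub>v = \<gamma> / G"
    unfolding l\<^sub>v_def using assms(1) a_pos G_pos by (simp add: field_simps)
  then show "f l\<^sub>v \<le> f l" if "l \<ge> 0" for l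
    using pos that by (simp add: f_le_iff)
qed

lemma endpoint_min:
  assumes "1 \<le> \<gamma>" "l \<ge> 0"
  shows "f 0 \<le> f l"
proof -
  have "t l \<le> t 0"
    using t_strict_antimono[of 0 l] assms(2) by (cases "l = 0") auto
  moreover have "t 0 \<le> \<gamma> / G"
    using divide_right_mono[OF assms(1), of G] G_pos by simp
  ultimately have "\<bar>t 0 - \<gamma> / G\<bar> \<le> \<bar>t l - \<gamma> / G\<bar>"
    using t_pos[OF assms(2)] by arith
  then show ?thesis
    using assms(2) by (simp add: f_le_iff)
qed

end

lemma MSE_RZF_polar:
  assumes "c1\<^sup>2 \<le> \<sigma>0\<^sup>2 * \<sigma>1\<^sup>2" "\<sigma>n \<noteq> 0" "l \<ge> 0" "cos \<tau> \<noteq> 0"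
  defines "\<delta> \<equiv> \<sigma>n\<^sup>2 * tan \<tau> - c1 * cos \<tau>"
    and "g \<equiv> l * (cos \<tau>)\<^sup>2 + \<sigma>1\<^sup>2 * (cos \<tau>)\<^sup>2 + \<sigma>n\<^sup>2"
  shows "MSE_RZF \<sigma>0 \<sigma>1 \<sigma>n c1 (vector [0, 1]) (vector [cos \<tau>, sin \<tau>] :: real^2) l =
    \<delta>\<^sup>2 * (\<sigma>1\<^sup>2 * (cos \<tau>)\<^sup>2 + \<sigma>n\<^sup>2) / g\<^sup>2 - 2 * \<sigma>n\<^sup>2 * \<delta> * tan \<tau> / g
      + \<sigma>n\<^sup>2 * ((tan \<tau>)\<^sup>2 + 1)"
  using MSE_RZF_2d[OF assms(1-4), where S = "sin \<tau>"] unfolding \<delta>_def g_def by (simp add: tan_def)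

lemma MSE_RZF_inverse_quadratic_profile:
  assumes "c1\<^sup>2 \<le> \<sigma>0\<^sup>2 * \<sigma>1\<^sup>2" "\<sigma>n \<noteq> 0" "cos \<tau> \<noteq> 0"
    and "\<delta> = \<sigma>n\<^sup>2 * tan \<tau> - c1 * cos \<tau>" "\<delta> \<noteq> 0" "\<gamma> = \<sigma>n\<^sup>2 * tan \<tau> / \<delta>"
  defines "G \<equiv> \<sigma>1\<^sup>2 * (cos \<tau>)\<^sup>2 + \<sigma>n\<^sup>2" and "K \<equiv> \<sigma>n\<^sup>2 * ((tan \<tau>)\<^sup>2 + 1)"
  shows "inverse_quadratic_profile
    (MSE_RZF \<sigma>0 \<sigma>1 \<sigma>n c1 (vector [0, 1]) (vector [cos \<tau>, sin \<tau>] :: real^2))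
    (\<delta>\<^sup>2) ((cos \<tau>)\<^sup>2) G \<gamma> K"
proof
  fix l :: real
  assume "l \<ge> 0"
  define g where "g = (cos \<tau>)\<^sup>2 * l + G"
  have \<gamma>\<delta>: "2 * \<sigma>n\<^sup>2 * \<delta> * tan \<tau> = 2 * \<gamma> * \<delta>\<^sup>2"
    using assms(5,6) by (simp add: power2_eq_square)
  have "MSE_RZF \<sigma>0 \<sigma>1 \<sigma>n c1 (vector [0, 1]) (vector [cos \<tau>, sin \<tau>] :: real^2) l
      = \<delta>\<^sup>2 * G / g\<^sup>2 - 2 * \<gamma> * \<delta>\<^sup>2 / g + K"
    using MSE_RZF_polar[OF assms(1,2) \<open>l \<ge> 0\<close> assms(3)]
    unfolding assms(4)[symmetric] \<gamma>\<delta> by (simp add: G_def K_def g_def ac_simps)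
  then show "MSE_RZF \<sigma>0 \<sigma>1 \<sigma>n c1 (vector [0, 1]) (vector [cos \<tau>, sin \<tau>] :: real^2) l =
      \<delta>\<^sup>2 * (G * (1 / ((cos \<tau>)\<^sup>2 * l + G))\<^sup>2 - 2 * \<gamma> * (1 / ((cos \<tau>)\<^sup>2 * l + G))) + K"
    unfolding g_def[symmetric] by (simp add: power_divide algebra_simps)
qed (use assms(2,3,5) in \<open>simp_all add: G_def add_nonneg_pos\<close>)

theorem lemma2:
  fixes \<tau> \<sigma>0 \<sigma>1 \<sigma>n c1 :: real
    and h0 h1 :: "real^2"
    and MSE g :: "real \<Rightarrow> real"
    and \<delta> \<gamma> :: real
  assumes h0_def: "h0 = vector [0, 1]"
    and h1_def: "h1 = vector [cos \<tau>, sin \<tau>]"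
    and MSE_def: "MSE = MSE_RZF \<sigma>0 \<sigma>1 \<sigma>n c1 h0 h1"
    and \<delta>_def: "\<delta> = \<sigma>n\<^sup>2 * tan \<tau> - c1 * cos \<tau>"
    and g_def: "g = (\<lambda>l. l * (cos \<tau>)\<^sup>2 + \<sigma>1\<^sup>2 * (cos \<tau>)\<^sup>2 + \<sigma>n\<^sup>2)"
    and \<gamma>_def: "\<gamma> = \<sigma>n\<^sup>2 * tan \<tau> / \<delta>"
    and tau: "-(pi/2) < \<tau>" "\<tau> < pi/2"
    and pos: "\<sigma>0 > 0" "\<sigma>1 > 0" "\<sigma>n > 0"
    and c1: "-(\<sigma>0 * \<sigma>1) \<le> c1" "c1 \<le> \<sigma>0 * \<sigma>1"
  shows
    "(\<forall>l\<ge>0. w_RZF (cov_R \<sigma>0 \<sigma>1 \<sigma>n c1 h0 h1) h0 h1 l =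
        vector [- (cos \<tau> * ((\<sigma>1\<^sup>2 + l) * sin \<tau> + c1))
                  / ((\<sigma>1\<^sup>2 + l) * (cos \<tau>)\<^sup>2 + \<sigma>n\<^sup>2), 1])
   \<and> (\<forall>l\<ge>0. g l > 0 \<and>
        MSE l = \<delta>\<^sup>2 * (\<sigma>1\<^sup>2 * (cos \<tau>)\<^sup>2 + \<sigma>n\<^sup>2) / (g l)\<^sup>2
                - 2 * \<sigma>n\<^sup>2 * \<delta> * tan \<tau> / g l + \<sigma>n\<^sup>2 * ((tan \<tau>)\<^sup>2 + 1))
   \<and> (\<delta> = 0 \<longrightarrow> (\<forall>l\<ge>0. MSE l = \<sigma>n\<^sup>2 * ((tan \<tau>)\<^sup>2 + 1)))
   \<and> (\<delta> \<noteq> 0 \<and> \<gamma> \<le> 0 \<longrightarrow>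
        (\<forall>a b. 0 \<le> a \<and> a < b \<longrightarrow> MSE b < MSE a)
        \<and> (\<exists>L. (MSE \<longlongrightarrow> L) at_top \<and> (INF l\<in>{0..}. MSE l) = L))
   \<and> (\<delta> \<noteq> 0 \<and> 0 < \<gamma> \<and> \<gamma> < 1 \<longrightarrow>
        (let ls = - (c1 * (\<sigma>1\<^sup>2 * (cos \<tau>)\<^sup>2 + \<sigma>n\<^sup>2)) / (\<sigma>n\<^sup>2 * sin \<tau>)
         in ls > 0 \<and> (\<forall>l\<ge>0. MSE ls \<le> MSE l)))
   \<and> (\<delta> \<noteq> 0 \<and> 1 \<le> \<gamma> \<longrightarrow> (\<forall>l\<ge>0. MSE 0 \<le> MSE l))"
proof -
  have cos_pos: "cos \<tau> > 0"
    using tau by (intro cos_gt_zero_pi) auto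
  then have cos_nz: "cos \<tau> \<noteq> 0"
    by simp
  have "\<bar>c1\<bar> \<le> \<bar>\<sigma>0 * \<sigma>1\<bar>"
    using c1 pos by auto
  then have corr: "c1\<^sup>2 \<le> \<sigma>0\<^sup>2 * \<sigma>1\<^sup>2"
    by (simp add: abs_le_square_iff power_mult_distrib)
  have \<sigma>n_nz: "\<sigma>n \<noteq> 0"
    using pos by simp
  note profile = MSE_RZF_inverse_quadratic_profile[OF corr \<sigma>n_nz cos_nz \<delta>_def _ \<gamma>_def,
      folded h0_def h1_def, folded MSE_def]
  have vertex: "- (c1 * (\<sigma>1\<^sup>2 * (cos \<tau>)\<^sup>2 + \<sigma>n\<^sup>2)) / (\<sigma>n\<^sup>2 * sin \<tau>)
      = (\<sigma>1\<^sup>2 * (cos \<tau>)\<^sup>2 + \<sigma>n\<^sup>2) * (1 - \<gamma>) / ((cos \<tau>)\<^sup>2 * \<gamma>)"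
    if "\<delta> \<noteq> 0" "\<gamma> \<noteq> 0"
  proof -
    have "sin \<tau> \<noteq> 0"
      using that unfolding \<gamma>_def by (auto simp: tan_def)
    then show ?thesis
      using that cos_nz \<sigma>n_nz unfolding \<gamma>_def \<delta>_def by (simp add: tan_def field_simps power2_eq_square)
  qed
  have g_pos: "g l > 0" if "l \<ge> 0" for l
    unfolding g_def using that pos by (intro add_nonneg_pos add_nonneg_nonneg) auto
  have closed: "MSE l = \<delta>\<^sup>2 * (\<sigma>1\<^sup>2 * (cos \<tau>)\<^sup>2 + \<sigma>n\<^sup>2) / (g l)\<^sup>2
      - 2 * \<sigma>n\<^sup>2 * \<delta> * tan \<tau> / g l + \<sigma>n\<^sup>2 * ((tan \<tau>)\<^sup>2 + 1)" if "l \<ge> 0" for l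
    using MSE_RZF_polar[OF corr \<sigma>n_nz that cos_nz] unfolding MSE_def h0_def h1_def \<delta>_def g_def by simp
  have zero_forcing: "(\<forall>a b. 0 \<le> a \<and> a < b \<longrightarrow> MSE b < MSE a)
      \<and> (\<exists>L. (MSE \<longlongrightarrow> L) at_top \<and> (INF l\<in>{0..}. MSE l) = L)" if "\<delta> \<noteq> 0" "\<gamma> \<le> 0"
    using inverse_quadratic_profile.strict_antimono[OF profile[OF that(1)] that(2)]
      inverse_quadratic_profile.tendsto_at_top[OF profile[OF that(1)]]
      inverse_quadratic_profile.INF_eq_limit[OF profile[OF that(1)] that(2)] by blast
  have interior_opt: "let ls = - (c1 * (\<sigma>1\<^sup>2 * (cos \<tau>)\<^sup>2 + \<sigma>n\<^sup>2)) / (\<sigma>n\<^sup>2 * sin \<tau>)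
      in ls > 0 \<and> (\<forall>l\<ge>0. MSE ls \<le> MSE l)" if "\<delta> \<noteq> 0" "0 < \<gamma>" "\<gamma> < 1"
    using inverse_quadratic_profile.vertex_min[OF profile[OF that(1)] that(2,3)] vertex[OF that(1)] that(2)
    unfolding Let_def by simp
  have endpoint_opt: "\<forall>l\<ge>0. MSE 0 \<le> MSE l" if "\<delta> \<noteq> 0" "1 \<le> \<gamma>"
    using inverse_quadratic_profile.endpoint_min[OF profile[OF that(1)] that(2)] by blast
  show ?thesis
    using w_RZF_2d[OF corr \<sigma>n_nz, where C = "cos \<tau>" and S = "sin \<tau>", folded h0_def h1_def]
      g_pos closed zero_forcing interior_opt endpoint_opt
    by auto
qed

end
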